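(* For a positive integer $n$, the set $A_n$ equals the set of positive divisors of $n$ if and only if $n\in\{1,2,4,6,12\}$.
   Context: A walk is a finite sequence $z_0,\dots,z_l$ of Gaussian integers with $|z_{j+1}-z_j|=1$. For natural numbers $n,d$, $n$ is $d$-avoidable if there exist a walk $(z_j)$ and indices $r,s$ with $z_r-z_s=n$ such that $z_t-z_u\neq d$ for all indices $t,u$. $A_n$ is the set of all $d\in\mathbb{N}$ such that $n$ is not $d$-avoidable. *)

theory Defs
  imports Main
begin

text \<open>Gaussian integers are represented as pairs (a,b) of integers, standing for a + b i.\<close>

type_synonym gint = "int \<times> int"

definition gdiff :: "gint \<Rightarrow> gint \<Rightarrow> gint" where
  "gdiff z w = (fst z - fst w, snd z - snd w)"

definition unit_step :: "gint \<Rightarrow> gint \<Rightarrow> bool" where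
  "unit_step z w \<longleftrightarrow> (fst (gdiff w z))^2 + (snd (gdiff w z))^2 = 1"

definition is_walk :: "gint list \<Rightarrow> bool" where
  "is_walk zs \<longleftrightarrow> zs \<noteq> [] \<and> (\<forall>j. Suc j < length zs \<longrightarrow> unit_step (zs ! j) (zs ! Suc j))"

definition avoidable :: "nat \<Rightarrow> nat \<Rightarrow> bool" where
  "avoidable n d \<longleftrightarrow> (\<exists>zs r s. is_walk zs \<and> r < length zs \<and> s < length zs
     \<and> gdiff (zs ! r) (zs ! s) = (int n, 0)
     \<and> (\<forall>t u. t < length zs \<longrightarrow> u < length zs \<longrightarrow> gdiff (zs ! t) (zs ! u) \<noteq> (int d, 0)))"

definition A :: "nat \<Rightarrow> nat set" where
  "A n = {d. d \<ge> 1 \<and> \<not> avoidable n d}"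

end

theory Submission
  imports Defs
begin

text \<open>If |n - k * d| < k for some k \<ge> 1, then n is not d-avoidable: subdividing a walk with a
  horizontal chord n by the factor k gives a walk with a chord k * n; a discrete universal chord
  theorem, proved with winding numbers of periodic walks, turns this into a chord n, and rounding
  its endpoints to vertices of the original walk yields a chord d. This covers every divisor d.
  If n is not 1, 2, 4, 6 or 12, the least non-divisor d of n satisfies d * (d + 1) \<le> 2 * n,
  which provides such a k, so A n contains a non-divisor. For n in {1, 2, 4, 6, 12} explicit walks
  avoid every non-divisor.\<close>

definition unit_vectors :: "gint set" where
  "unit_vectors = {(1, 0), (-1, 0), (0, 1), (0, -1)}"

lemma sum_squares_eq_1_iff: "(a::int)^2 + b^2 = 1 \<longleftrightarrow> (a, b) \<in> unit_vectors"
proof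
  assume sq: "a^2 + b^2 = 1"
  then have "a^2 \<le> 1" "b^2 \<le> 1" by (smt (verit) zero_le_power2)+
  then have "\<bar>a\<bar> \<le> 1" "\<bar>b\<bar> \<le> 1" by (simp_all add: abs_square_le_1)
  then have "a \<in> {-1, 0, 1}" "b \<in> {-1, 0, 1}" by auto
  then show "(a, b) \<in> unit_vectors" using sq by (auto simp: unit_vectors_def)
qed (auto simp: unit_vectors_def)

lemma unit_step_iff_unit_vector: "unit_step p q \<longleftrightarrow> gdiff q p \<in> unit_vectors"
  unfolding unit_step_def by (simp add: sum_squares_eq_1_iff)

lemma unit_step_iff:
  "unit_step p q \<longleftrightarrow>
     (fst q = fst p + 1 \<and> snd q = snd p) \<or> (fst q = fst p - 1 \<and> snd q = snd p) \<or>
     (fst q = fst p \<and> snd q = snd p + 1) \<or> (fst q = fst p \<and> snd q = snd p - 1)"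
  unfolding unit_step_iff_unit_vector unit_vectors_def gdiff_def by auto

lemma unit_step_translate:
  "unit_step (fst p + a, snd p) (fst q + a, snd q) \<longleftrightarrow> unit_step p q"
  unfolding unit_step_iff by auto

lemma sum_int_telescope:
  fixes f :: "int \<Rightarrow> 'a::ab_group_add"
  shows "a \<le> b \<Longrightarrow> (\<Sum>q\<in>{a..<b}. f (q + 1) - f q) = f b - f a"
proof (induction b rule: int_ge_induct)
  case (step b)
  then have "{a..<b + 1} = insert b {a..<b}" by auto
  with step show ?case by (simp add: algebra_simps)
qed simp

section \<open>Winding numbers of periodic walks\<close>

locale periodic_walk =
  fixes Y :: "int \<Rightarrow> gint" and L M :: int
  assumes period_pos: "L > 0" and drift_pos: "M > 0"
    and unit_steps: "\<And>q. unit_step (Y q) (Y (q + 1))"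
    and periodic: "\<And>q. Y (q + L) = (fst (Y q) + M, snd (Y q))"
begin

abbreviation X where "X q \<equiv> fst (Y q)"
abbreviation H where "H q \<equiv> snd (Y q)"

lemma step_cases:
  "(X (q + 1) = X q + 1 \<and> H (q + 1) = H q) \<or> (X (q + 1) = X q - 1 \<and> H (q + 1) = H q) \<or>
   (X (q + 1) = X q \<and> H (q + 1) = H q + 1) \<or> (X (q + 1) = X q \<and> H (q + 1) = H q - 1)"
  using unit_steps[of q] unfolding unit_step_iff .

lemma shift_periods: "Y (q + t * L) = (X q + t * M, H q)"
proof -
  have nat_shift: "Y (p + int j * L) = (X p + int j * M, H p)" for p j
  proof (induction j)
    case (Suc j)
    have "Y (p + int (Suc j) * L) = Y ((p + int j * L) + L)" by (simp add: algebra_simps)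
    also have "\<dots> = (X (p + int j * L) + M, H (p + int j * L))" by (rule periodic)
    finally show ?case using Suc by (simp add: algebra_simps)
  qed simp
  show ?thesis
  proof (cases "t \<ge> 0")
    case True
    then show ?thesis using nat_shift[of q "nat t"] by simp
  next
    case False
    have "Y q = Y ((q + t * L) + int (nat (- t)) * L)" using False by (simp add: algebra_simps)
    also have "\<dots> = (X (q + t * L) + int (nat (- t)) * M, H (q + t * L))" by (rule nat_shift)
    finally show ?thesis using False by (simp add: prod_eq_iff)
  qed
qed

lemma decompose_by_period: "Y q = (X (q mod L) + (q div L) * M, H (q mod L))"
  using shift_periods[of "q mod L" "q div L"] by simp

definition drift_bound :: int where
  "drift_bound = Max ((\<lambda>r. \<bar>X r\<bar>) ` {0..<L})"

lemma abs_drift_le: "\<bar>X q - (q div L) * M\<bar> \<le> drift_bound"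
proof -
  have "q mod L \<in> {0..<L}" using period_pos by simp
  then have "\<bar>X (q mod L)\<bar> \<le> drift_bound" unfolding drift_bound_def by (intro Max_ge) auto
  then show ?thesis using decompose_by_period[of q] by (metis add_diff_cancel_right' fst_conv)
qed

lemma drift_bound_nonneg: "drift_bound \<ge> 0"
  using abs_drift_le[of 0] by linarith

definition horizon :: "int \<Rightarrow> int" where
  "horizon x = L * (\<bar>x\<bar> + drift_bound + 3)"

lemma horizon_pos: "horizon x > 0"
  unfolding horizon_def using period_pos drift_bound_nonneg by simp

lemma far_right:
  assumes "horizon x \<le> q"
  shows "x + 2 < X q"
proof -
  have "L * (\<bar>x\<bar> + drift_bound + 3) \<le> q" using assms horizon_def by simp
  then have "(L * (\<bar>x\<bar> + drift_bound + 3)) div L \<le> q div L"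
    using period_pos by (intro zdiv_mono1) auto
  then have k: "\<bar>x\<bar> + drift_bound + 3 \<le> q div L" using period_pos by simp
  then have "0 < q div L" using drift_bound_nonneg by linarith
  then have "q div L \<le> (q div L) * M" using drift_pos by (simp add: mult_le_cancel_left1)
  then show ?thesis using abs_drift_le[of q] k by linarith
qed

lemma far_left:
  assumes "q \<le> - horizon x"
  shows "X q < x - 2"
proof -
  have "q \<le> L * (- (\<bar>x\<bar> + drift_bound + 3))" using assms unfolding horizon_def by (simp add: algebra_simps)
  then have "q div L \<le> (L * (- (\<bar>x\<bar> + drift_bound + 3))) div L"
    using period_pos by (intro zdiv_mono1) auto
  then have k: "q div L \<le> - (\<bar>x\<bar> + drift_bound + 3)" using period_pos by simp
  then have "q div L < 0" using drift_bound_nonneg by linarith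
  then have "(q div L) * M \<le> q div L" using drift_pos by (simp add: mult_le_cancel_left2)
  then show ?thesis using abs_drift_le[of q] k by linarith
qed

definition crossing :: "int \<Rightarrow> int \<Rightarrow> int" where
  "crossing x q = (if X q = x \<and> X (q + 1) = x + 1 then 1
                   else if X q = x + 1 \<and> X (q + 1) = x then -1 else 0)"

lemma crossing_telescope: "crossing x q = of_bool (x < X (q + 1)) - of_bool (x < X q)"
  using step_cases[of q] unfolding crossing_def by auto

lemma crossing_beyond_horizon:
  assumes "horizon x \<le> q \<or> q < - horizon x"
  shows "crossing x q = 0"
proof -
  have "x + 2 < X q \<or> X q < x - 2" using assms far_right[of x q] far_left[of q x] by force
  then show ?thesis unfolding crossing_def by auto
qed

lemma sum_crossing_window:
  assumes "a \<le> - horizon x" "horizon x \<le> b"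
  shows "(\<Sum>q\<in>{a..<b}. crossing x q * f q) = (\<Sum>q\<in>{-horizon x..<horizon x}. crossing x q * f q)"
  by (rule sum.mono_neutral_right) (use assms crossing_beyond_horizon in auto)

lemma net_crossing:
  assumes "a \<le> - horizon x" "horizon x \<le> b"
  shows "(\<Sum>q\<in>{a..<b}. crossing x q) = 1"
proof -
  have "a \<le> b" using assms horizon_pos[of x] by linarith
  then have "(\<Sum>q\<in>{a..<b}. crossing x q) = of_bool (x < X b) - of_bool (x < X a)"
    unfolding crossing_telescope by (rule sum_int_telescope)
  then show ?thesis using far_right[of x b] far_left[of a x] assms by simp
qed

lemma crossing_left_endpoint:
  assumes "crossing x q \<noteq> 0"
  shows "(x, H q) \<in> range Y"
proof (cases "X q = x")
  case True
  then have "Y q = (x, H q)" by (simp add: prod_eq_iff)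
  then show ?thesis by (metis rangeI)
next
  case False
  then have "X (q + 1) = x" "X q = x + 1" using assms unfolding crossing_def by (auto split: if_splits)
  then have "Y (q + 1) = (x, H q)" using step_cases[of q] by (auto simp: prod_eq_iff)
  then show ?thesis by (metis rangeI)
qed

text \<open>A winding number of the walk around the point (x, h) (with the crossing line between
  columns x and x + 1); it is constant on each connected region of the complement of the walk.\<close>
definition crossings_above :: "int \<Rightarrow> int \<Rightarrow> int" where
  "crossings_above x h = (\<Sum>q\<in>{-horizon x..<horizon x}. crossing x q * of_bool (h < H q))"

lemma crossings_above_window:
  assumes "a \<le> - horizon x" "horizon x \<le> b"
  shows "crossings_above x h = (\<Sum>q\<in>{a..<b}. crossing x q * of_bool (h < H q))"
  unfolding crossings_above_def using sum_crossing_window[OF assms] by simp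

lemma crossings_above_up:
  assumes "(x, h + 1) \<notin> range Y"
  shows "crossings_above x (h + 1) = crossings_above x h"
  unfolding crossings_above_def
proof (rule sum.cong[OF refl])
  fix q
  have "crossing x q \<noteq> 0 \<Longrightarrow> H q \<noteq> h + 1" using crossing_left_endpoint[of x q] assms by auto
  then show "crossing x q * of_bool (h + 1 < H q) = crossing x q * of_bool (h < H q)"
    by (cases "crossing x q = 0") auto
qed

lemma crossing_flux:
  assumes "(x + 1, h) \<notin> range Y"
  shows "of_bool (X (q + 1) = x + 1 \<and> h < H (q + 1)) - of_bool (X q = x + 1 \<and> h < H q)
        = crossing x q * of_bool (h < H q) - crossing (x + 1) q * of_bool (h < H q)"
proof -
  have off: "\<not> (X p = x + 1 \<and> H p = h)" for p using assms by (metis prod.collapse rangeI)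
  from step_cases[of q] show ?thesis
    by (elim disjE conjE) (use off[of q] off[of "q + 1"] in \<open>auto simp: crossing_def\<close>)
qed

lemma crossings_above_right:
  assumes "(x + 1, h) \<notin> range Y"
  shows "crossings_above (x + 1) h = crossings_above x h"
proof -
  define T where "T = max (horizon x) (horizon (x + 1))"
  have T: "horizon x \<le> T" "horizon (x + 1) \<le> T" unfolding T_def by auto
  let ?f = "\<lambda>q. of_bool (X q = x + 1 \<and> h < H q) :: int"
  have "(\<Sum>q\<in>{-T..<T}. crossing x q * of_bool (h < H q) - crossing (x + 1) q * of_bool (h < H q))
      = (\<Sum>q\<in>{-T..<T}. ?f (q + 1) - ?f q)"
    using crossing_flux[OF assms] by simp
  also have "\<dots> = ?f T - ?f (-T)"
    using T horizon_pos[of x] by (intro sum_int_telescope) auto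
  also have "\<dots> = 0" using far_right[of "x + 1" T] far_left[of "-T" x] T by auto
  finally show ?thesis
    using crossings_above_window[of "-T" x T] crossings_above_window[of "-T" "x + 1" T] T
    by (simp add: sum_subtractf)
qed

lemma crossings_above_step:
  assumes "unit_step p p'" "p \<notin> range Y" "p' \<notin> range Y"
  shows "crossings_above (fst p') (snd p') = crossings_above (fst p) (snd p)"
proof -
  obtain x h x' h' where p: "p = (x, h)" and p': "p' = (x', h')" by fastforce
  have "crossings_above x' h' = crossings_above x h"
    using assms(1) unfolding unit_step_iff p p' fst_conv snd_conv
  proof (elim disjE conjE)
    assume "x' = x + 1" "h' = h"
    then show ?thesis using crossings_above_right[of x h] assms(3) p p' by simp
  next
    assume "x' = x - 1" "h' = h"
    then show ?thesis using crossings_above_right[of "x - 1" h] assms(2) p p' by simp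
  next
    assume "x' = x" "h' = h + 1"
    then show ?thesis using crossings_above_up[of x h] assms(3) p p' by simp
  next
    assume "x' = x" "h' = h - 1"
    then show ?thesis using crossings_above_up[of x "h - 1"] assms(2) p p' by simp
  qed
  then show ?thesis using p p' by simp
qed

lemma crossings_above_along_walk:
  fixes Z :: "int \<Rightarrow> gint"
  assumes steps: "\<And>q. unit_step (Z q) (Z (q + 1))" and avoids: "\<And>q. Z q \<notin> range Y"
  shows "crossings_above (fst (Z a)) (snd (Z a)) = crossings_above (fst (Z b)) (snd (Z b))"
proof -
  have forward: "crossings_above (fst (Z a)) (snd (Z a)) = crossings_above (fst (Z b)) (snd (Z b))"
    if "a \<le> b" for a b
    using that
  proof (induction b rule: int_ge_induct)
    case (step b)
    then show ?case using crossings_above_step[OF steps avoids avoids] by simp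
  qed simp
  show ?thesis
  proof (cases "a \<le> b")
    case False
    then show ?thesis using forward[of b a] by simp
  qed (rule forward)
qed

definition max_height :: int where
  "max_height = Max (H ` {0..<L})"

lemma height_le_max: "H q \<le> max_height"
proof -
  have "q mod L \<in> {0..<L}" using period_pos by simp
  then have "H (q mod L) \<le> max_height" unfolding max_height_def by (intro Max_ge) auto
  then show ?thesis using decompose_by_period[of q] by (metis snd_conv)
qed

lemma max_height_attained: "\<exists>q. H q = max_height"
proof -
  have "max_height \<in> H ` {0..<L}" unfolding max_height_def using period_pos by (intro Max_in) auto
  then show ?thesis by auto
qed

lemma crossings_above_max_height:
  assumes "max_height \<le> h"
  shows "crossings_above x h = 0"
proof -
  have "\<not> h < H q" for q using height_le_max[of q] assms by linarith
  then show ?thesis unfolding crossings_above_def by simp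
qed

lemma crossings_above_avoiding_walk:
  fixes Z :: "int \<Rightarrow> gint"
  assumes steps: "\<And>q. unit_step (Z q) (Z (q + 1))" and avoids: "\<And>q. Z q \<notin> range Y"
    and high: "max_height \<le> snd (Z q0)"
  shows "crossings_above (fst (Z q)) (snd (Z q)) = 0"
  using crossings_above_along_walk[of Z q q0, OF steps avoids] crossings_above_max_height[OF high]
  by simp

end

locale periodic_walk_pair = Y: periodic_walk Y L M + Z: periodic_walk Z L' M'
  for Y L M Z L' M'
begin

lemma crossing_product_split:
  assumes disjoint: "range Y \<inter> range Z = {}"
    and T: "Y.horizon 0 \<le> T" "Z.horizon 0 \<le> T"
  shows "(\<Sum>q\<in>{-T..<T}. Z.crossing 0 q) * (\<Sum>q'\<in>{-T..<T}. Y.crossing 0 q')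
       = (\<Sum>q\<in>{-T..<T}. Z.crossing 0 q * Y.crossings_above 0 (Z.H q))
       + (\<Sum>q'\<in>{-T..<T}. Y.crossing 0 q' * Z.crossings_above 0 (Y.H q'))"
proof -
  let ?W = "{-T..<T}"
  have split: "Z.crossing 0 q * Y.crossing 0 q'
      = Z.crossing 0 q * Y.crossing 0 q' * of_bool (Z.H q < Y.H q')
      + Z.crossing 0 q * Y.crossing 0 q' * of_bool (Y.H q' < Z.H q)" for q q'
  proof (cases "Z.crossing 0 q = 0 \<or> Y.crossing 0 q' = 0")
    case False
    then have "(0, Z.H q) \<in> range Z" "(0, Y.H q') \<in> range Y"
      using Z.crossing_left_endpoint Y.crossing_left_endpoint by auto
    then have "Z.H q \<noteq> Y.H q'" using disjoint by auto
    then show ?thesis by auto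
  qed auto
  have "(\<Sum>q\<in>?W. Z.crossing 0 q) * (\<Sum>q'\<in>?W. Y.crossing 0 q')
      = (\<Sum>q\<in>?W. \<Sum>q'\<in>?W. Z.crossing 0 q * Y.crossing 0 q')"
    by (simp add: sum_product)
  also have "\<dots> = (\<Sum>q\<in>?W. \<Sum>q'\<in>?W. Z.crossing 0 q * Y.crossing 0 q' * of_bool (Z.H q < Y.H q'))
      + (\<Sum>q\<in>?W. \<Sum>q'\<in>?W. Z.crossing 0 q * Y.crossing 0 q' * of_bool (Y.H q' < Z.H q))"
    by (subst split) (simp add: sum.distrib)
  also have "(\<Sum>q\<in>?W. \<Sum>q'\<in>?W. Z.crossing 0 q * Y.crossing 0 q' * of_bool (Z.H q < Y.H q'))
      = (\<Sum>q\<in>?W. Z.crossing 0 q * Y.crossings_above 0 (Z.H q))"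
    using Y.crossings_above_window[of "-T" 0 T] T
    by (simp add: sum_distrib_left mult.assoc del: sum_mult_of_bool_eq)
  also have "(\<Sum>q\<in>?W. \<Sum>q'\<in>?W. Z.crossing 0 q * Y.crossing 0 q' * of_bool (Y.H q' < Z.H q))
      = (\<Sum>q'\<in>?W. Y.crossing 0 q' * Z.crossings_above 0 (Y.H q'))"
    using Z.crossings_above_window[of "-T" 0 T] T
    by (subst sum.swap) (simp add: sum_distrib_left ac_simps del: sum_mult_of_bool_eq)
  finally show ?thesis .
qed

text \<open>Otherwise each walk reaches the maximal height of the other without meeting it, so the
  winding number of each walk vanishes on the other; but the product of the net crossing numbers
  of the line between columns 0 and 1 splits into these winding numbers and equals 1.\<close>
lemma meet_if_max_height_eq:
  assumes "Y.max_height = Z.max_height"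
  shows "range Y \<inter> range Z \<noteq> {}"
proof
  assume disjoint: "range Y \<inter> range Z = {}"
  define T where "T = max (Y.horizon 0) (Z.horizon 0)"
  have T: "Y.horizon 0 \<le> T" "Z.horizon 0 \<le> T" unfolding T_def by auto
  obtain qY where qY: "Y.H qY = Y.max_height" using Y.max_height_attained by blast
  obtain qZ where qZ: "Z.H qZ = Z.max_height" using Z.max_height_attained by blast
  have "Z.crossing 0 q * Y.crossings_above 0 (Z.H q) = 0" for q
  proof (cases "Z.crossing 0 q = 0")
    case False
    then obtain p where "Z p = (0, Z.H q)" using Z.crossing_left_endpoint by (metis rangeE)
    moreover have "Y.crossings_above (fst (Z p)) (snd (Z p)) = 0"
      using disjoint qZ assms Z.unit_steps by (intro Y.crossings_above_avoiding_walk[of Z qZ]) auto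
    ultimately show ?thesis by simp
  qed simp
  moreover have "Y.crossing 0 q * Z.crossings_above 0 (Y.H q) = 0" for q
  proof (cases "Y.crossing 0 q = 0")
    case False
    then obtain p where "Y p = (0, Y.H q)" using Y.crossing_left_endpoint by (metis rangeE)
    moreover have "Z.crossings_above (fst (Y p)) (snd (Y p)) = 0"
      using disjoint qY assms Y.unit_steps by (intro Z.crossings_above_avoiding_walk[of Y qY]) auto
    ultimately show ?thesis by simp
  qed simp
  ultimately have "(\<Sum>q\<in>{-T..<T}. Z.crossing 0 q) * (\<Sum>q'\<in>{-T..<T}. Y.crossing 0 q') = 0"
    unfolding crossing_product_split[OF disjoint T] by (simp add: sum.neutral del: mult_eq_0_iff)
  then show False using Y.net_crossing[of "-T" 0 T] Z.net_crossing[of "-T" 0 T] T by simp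
qed

end

lemma (in periodic_walk) meets_horizontal_translate: "\<exists>q1 q2. Y q1 = (X q2 + s, H q2)"
proof -
  define Z where "Z q = (X q + s, H q)" for q
  have "periodic_walk Z L M"
    using period_pos drift_pos unit_steps periodic
    by unfold_locales (auto simp: Z_def unit_step_translate)
  then interpret periodic_walk_pair Y L M Z L M
    by (intro periodic_walk_pair.intro) (rule periodic_walk_axioms)
  have "max_height = Z.max_height" unfolding max_height_def Z.max_height_def Z_def by simp
  then obtain q1 q2 where "Y q1 = Z q2" using meet_if_max_height_eq by blast
  then show ?thesis unfolding Z_def by blast
qed

section \<open>Horizontal chords of walks\<close>

lemma horizontal_chord_of_periodic:
  fixes Y :: "int \<Rightarrow> gint"
  assumes "L > 0" "M \<noteq> 0" and steps: "\<And>q. unit_step (Y q) (Y (q + 1))"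
    and periodic: "\<And>q. Y (q + L) = (fst (Y q) + M, snd (Y q))"
  shows "\<exists>q1 q2. Y q1 = (fst (Y q2) + s, snd (Y q2))"
proof (cases "M > 0")
  case True
  then interpret periodic_walk Y L M using assms by unfold_locales auto
  show ?thesis by (rule meets_horizontal_translate)
next
  case False
  define Y' where "Y' q = (- fst (Y q), snd (Y q))" for q
  have "unit_step (Y' q) (Y' (q + 1))" for q
    using steps[of q] unfolding Y'_def unit_step_iff by auto
  then have "periodic_walk Y' L (- M)"
    using assms False periodic by unfold_locales (auto simp: Y'_def)
  then obtain q1 q2 where "Y' q1 = (fst (Y' q2) + - s, snd (Y' q2))"
    using periodic_walk.meets_horizontal_translate by blast
  then have "Y q1 = (fst (Y q2) + s, snd (Y q2))" unfolding Y'_def by (auto simp: prod_eq_iff)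
  then show ?thesis by blast
qed

definition periodic_extension :: "gint list \<Rightarrow> nat \<Rightarrow> int \<Rightarrow> int \<Rightarrow> int \<Rightarrow> gint" where
  "periodic_extension ws i L V q =
     (fst (ws ! (i + nat (q mod L))) + (q div L) * V, snd (ws ! (i + nat (q mod L))))"

lemma periodic_extension_eq:
  assumes "0 \<le> r" "r < L"
  shows "periodic_extension ws i L V (k * L + r) = (fst (ws ! (i + nat r)) + k * V, snd (ws ! (i + nat r)))"
proof -
  have "(k * L + r) div L = k" "(k * L + r) mod L = r" using assms by simp_all
  then show ?thesis unfolding periodic_extension_def by simp
qed

lemma periodic_extension_period:
  "0 < L \<Longrightarrow> periodic_extension ws i L V (q + L) =
     (fst (periodic_extension ws i L V q) + V, snd (periodic_extension ws i L V q))"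
proof -
  assume "0 < L"
  then have "(q + L) div L = q div L + 1" "(q + L) mod L = q mod L" by (simp_all add: div_add_self2)
  then show ?thesis unfolding periodic_extension_def by (simp add: distrib_right)
qed

lemma periodic_extension_step:
  assumes walk: "is_walk ws" and L: "0 < L" "i + nat L < length ws"
    and closes: "ws ! (i + nat L) = (fst (ws ! i) + V, snd (ws ! i))"
  shows "unit_step (periodic_extension ws i L V q) (periodic_extension ws i L V (q + 1))"
proof -
  define r k where "r = q mod L" and "k = q div L"
  have r: "0 \<le> r" "r < L" and q: "q = k * L + r" using L unfolding r_def k_def by simp_all
  have step: "unit_step (ws ! j) (ws ! (j + 1))" if "j + 1 < length ws" for j
    using walk that unfolding is_walk_def by simp
  have here: "periodic_extension ws i L V q = (fst (ws ! (i + nat r)) + k * V, snd (ws ! (i + nat r)))"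
    using periodic_extension_eq[OF r] q by simp
  show ?thesis
  proof (cases "r + 1 < L")
    case True
    have "periodic_extension ws i L V (q + 1)
        = (fst (ws ! (i + nat r + 1)) + k * V, snd (ws ! (i + nat r + 1)))"
      using periodic_extension_eq[of "r + 1" L ws i V k] r True q by (simp add: add.assoc nat_add_distrib)
    moreover have "i + nat r + 1 < length ws" using True L by linarith
    ultimately show ?thesis using here step[of "i + nat r"] by (simp add: unit_step_translate)
  next
    case False
    then have last: "i + nat r + 1 = i + nat L" and wrap: "r + 1 = L" using r by linarith+
    have "q + 1 = (k + 1) * L + 0" unfolding q distrib_right using wrap by linarith
    then have "periodic_extension ws i L V (q + 1) = periodic_extension ws i L V ((k + 1) * L + 0)"
      by (simp only:)
    also have "\<dots> = (fst (ws ! i) + (k + 1) * V, snd (ws ! i))"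
      using periodic_extension_eq[of 0 L ws i V "k + 1"] L by simp
    also have "\<dots> = (fst (ws ! (i + nat r + 1)) + k * V, snd (ws ! (i + nat r + 1)))"
      using closes last by (simp add: algebra_simps)
    finally have "periodic_extension ws i L V (q + 1)
        = (fst (ws ! (i + nat r + 1)) + k * V, snd (ws ! (i + nat r + 1)))" .
    then show ?thesis using here step[of "i + nat r"] last L by (simp add: unit_step_translate)
  qed
qed

text \<open>The chord from ws ! lo to ws ! hi, closed up periodically, meets its own translate by c.\<close>
lemma shorter_chord_of_multiple:
  assumes walk: "is_walk ws" and hi: "lo < hi" "hi < length ws"
    and closing: "gdiff (ws ! hi) (ws ! lo) = (s * c, 0)" and s: "s \<noteq> 0" and c: "c \<noteq> 0"
  obtains a b m where "lo \<le> a" "a < hi" "lo \<le> b" "b < hi"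
    "gdiff (ws ! a) (ws ! b) = ((1 + m * s) * c, 0)"
proof -
  define L V where "L = int (hi - lo)" and "V = s * c"
  have lo_hi: "lo + nat L = hi" using hi(1) unfolding L_def by simp
  have L: "0 < L" "lo + nat L < length ws" using hi lo_hi unfolding L_def by auto
  have closes: "ws ! (lo + nat L) = (fst (ws ! lo) + V, snd (ws ! lo))"
    using closing unfolding lo_hi V_def gdiff_def by (auto simp: prod_eq_iff)
  have "V \<noteq> 0" using c s unfolding V_def by simp
  then obtain q1 q2 where q12: "periodic_extension ws lo L V q1
      = (fst (periodic_extension ws lo L V q2) + c, snd (periodic_extension ws lo L V q2))"
    using horizontal_chord_of_periodic[OF L(1) _ periodic_extension_step[OF walk L closes]
        periodic_extension_period[OF L(1)]] by blast
  define a b where "a = lo + nat (q1 mod L)" and "b = lo + nat (q2 mod L)"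
  have "nat (q1 mod L) < hi - lo" "nat (q2 mod L) < hi - lo"
    using L unfolding L_def by (simp_all add: nat_less_iff)
  then have "lo \<le> a" "a < hi" "lo \<le> b" "b < hi" unfolding a_def b_def by auto
  moreover have "gdiff (ws ! a) (ws ! b) = ((1 + (q2 div L - q1 div L) * s) * c, 0)"
    using q12 unfolding periodic_extension_def a_def b_def gdiff_def V_def
    by (auto simp: algebra_simps)
  ultimately show ?thesis by (rule that)
qed

text \<open>By induction on the length of the chord: a chord of length s * c with s \<noteq> 1, -1 gives,
  by the previous lemma, a strictly shorter one of length (1 + m * s) * c, and 1 + m * s \<noteq> 0.\<close>
lemma walk_chord_of_multiple:
  assumes walk: "is_walk ws" and ij: "i < length ws" "j < length ws"
    and chord: "gdiff (ws ! i) (ws ! j) = (t * c, 0)" and t: "t \<noteq> 0"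
  shows "\<exists>a b. a < length ws \<and> b < length ws \<and> gdiff (ws ! a) (ws ! b) = (c, 0)"
  using ij chord t
proof (induction "max i j - min i j" arbitrary: i j t rule: less_induct)
  case less
  show ?case
  proof (cases "c = 0 \<or> t = 1 \<or> t = -1")
    case True
    then consider "c = 0" | "t = 1" | "t = -1" by blast
    then show ?thesis
    proof cases
      case 1
      then show ?thesis using less.prems(1) by (intro exI[of _ i]) (simp add: gdiff_def)
    next
      case 2
      then show ?thesis using less.prems(1-3) by auto
    next
      case 3
      then have "gdiff (ws ! j) (ws ! i) = (c, 0)" using less.prems(3) by (auto simp: gdiff_def)
      then show ?thesis using less.prems(1,2) by blast
    qed
  next
    case False
    obtain lo hi s where hi: "lo < hi" "hi < length ws" "hi - lo = max i j - min i j"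
      and closing: "gdiff (ws ! hi) (ws ! lo) = (s * c, 0)" and s: "s \<noteq> 0" "s \<noteq> 1" "s \<noteq> -1"
    proof (cases "j < i")
      case True
      then show ?thesis using that[of j i t] less.prems False by auto
    next
      case False
      have "i \<noteq> j" using less.prems \<open>\<not> (c = 0 \<or> t = 1 \<or> t = -1)\<close> by (auto simp: gdiff_def)
      then show ?thesis using that[of i j "- t"] less.prems \<open>\<not> (c = 0 \<or> t = 1 \<or> t = -1)\<close> False
        by (auto simp: gdiff_def)
    qed
    then obtain a b m where ab: "lo \<le> a" "a < hi" "lo \<le> b" "b < hi"
      and chord_ab: "gdiff (ws ! a) (ws ! b) = ((1 + m * s) * c, 0)"
      using shorter_chord_of_multiple[OF walk hi(1,2) closing] False by blast
    have "1 + m * s \<noteq> 0"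
    proof
      assume "1 + m * s = 0"
      then have "(- m) * s = 1" by (simp add: algebra_simps)
      then show False using s zmult_eq_1_iff[of "- m" s] by auto
    qed
    moreover have "max a b - min a b < max i j - min i j" using ab hi by linarith
    ultimately show ?thesis using less.hyps[OF _ _ _ chord_ab] ab hi by auto
  qed
qed

section \<open>Subdivided walks\<close>

text \<open>The walk scaled by the factor k, with every step replaced by k unit steps.\<close>
definition subdivision_point :: "nat \<Rightarrow> gint list \<Rightarrow> nat \<Rightarrow> gint" where
  "subdivision_point k zs j =
     (let i = j div k; r = int (j mod k); p = zs ! i; u = gdiff (zs ! (i + 1)) p
      in (int k * fst p + r * fst u, int k * snd p + r * snd u))"

definition subdivide :: "nat \<Rightarrow> gint list \<Rightarrow> gint list" where
  "subdivide k zs = map (subdivision_point k zs) [0..<k * (length zs - 1) + 1]"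

lemma length_subdivide: "length (subdivide k zs) = k * (length zs - 1) + 1"
  unfolding subdivide_def by simp

lemma nth_subdivide: "j < length (subdivide k zs) \<Longrightarrow> subdivide k zs ! j = subdivision_point k zs j"
  unfolding subdivide_def by (simp del: upt_Suc)

lemma nth_subdivide_mult:
  assumes "1 \<le> k" "i < length zs"
  shows "subdivide k zs ! (k * i) = (int k * fst (zs ! i), int k * snd (zs ! i))"
proof -
  have "k * i < length (subdivide k zs)"
    using assms by (auto simp: length_subdivide intro!: le_imp_less_Suc mult_le_mono2)
  then show ?thesis using assms(1) by (simp add: nth_subdivide subdivision_point_def Let_def)
qed

lemma is_walk_subdivide:
  assumes walk: "is_walk zs" and k: "1 \<le> k"
  shows "is_walk (subdivide k zs)"
  unfolding is_walk_def
proof (intro conjI allI impI)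
  show "subdivide k zs \<noteq> []" unfolding subdivide_def by simp
next
  fix j assume j: "Suc j < length (subdivide k zs)"
  define i where "i = j div k"
  have "j < k * (length zs - 1)" using j by (simp add: length_subdivide)
  then have "i < length zs - 1" using k unfolding i_def by (simp add: div_less_iff_less_mult mult.commute)
  then have u: "gdiff (zs ! (i + 1)) (zs ! i) \<in> unit_vectors"
    using walk unfolding is_walk_def unit_step_iff_unit_vector by auto
  have nth: "subdivide k zs ! j = subdivision_point k zs j"
    "subdivide k zs ! Suc j = subdivision_point k zs (Suc j)"
    using j by (auto intro!: nth_subdivide)
  show "unit_step (subdivide k zs ! j) (subdivide k zs ! Suc j)"
  proof (cases "Suc (j mod k) = k")
    case False
    then have "Suc j div k = i" "Suc j mod k = Suc (j mod k)" unfolding i_def by (simp_all add: div_Suc mod_Suc)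
    then show ?thesis using u unfolding nth subdivision_point_def Let_def unit_step_iff_unit_vector i_def
      by (simp add: gdiff_def algebra_simps)
  next
    case True
    then have "Suc j div k = Suc i" "Suc j mod k = 0" and r: "int (j mod k) = int k - 1"
      unfolding i_def by (simp_all add: div_Suc mod_Suc)
    then show ?thesis using u unfolding nth subdivision_point_def Let_def unit_step_iff_unit_vector i_def
      by (simp add: gdiff_def r algebra_simps)
  qed
qed

lemma nth_subdivide_cases:
  assumes "zs \<noteq> []" "1 \<le> k" "j < length (subdivide k zs)"
  obtains i r where "i < length zs" "0 \<le> r" "r < int k" "0 < r \<Longrightarrow> i + 1 < length zs"
    "subdivide k zs ! j = (int k * fst (zs ! i) + r * fst (gdiff (zs ! (i + 1)) (zs ! i)),
                           int k * snd (zs ! i) + r * snd (gdiff (zs ! (i + 1)) (zs ! i)))"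
proof -
  define i r where "i = j div k" and "r = int (j mod k)"
  have j: "j = k * i + j mod k" "j < k * (length zs - 1) + 1"
    using assms(3) unfolding i_def by (simp_all add: length_subdivide)
  moreover have "k * (length zs - 1) + 1 \<le> k * length zs" using assms(1,2) by (cases "length zs") auto
  ultimately have "i < length zs" using assms(2) unfolding i_def by (simp add: div_less_iff_less_mult mult.commute)
  moreover have "0 < r \<Longrightarrow> i + 1 < length zs"
  proof -
    assume "0 < r"
    then have "k * i < k * (length zs - 1)" using j unfolding r_def by linarith
    then show "i + 1 < length zs" by (simp; linarith)
  qed
  moreover have "0 \<le> r" "r < int k" using assms(2) unfolding r_def by auto
  ultimately show ?thesis
    using that assms(3) unfolding nth_subdivide[OF assms(3)] subdivision_point_def Let_def i_def r_def
    by blast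
qed

lemma abs_le_of_unit_vector: "(ux, uy) \<in> unit_vectors \<Longrightarrow> \<bar>ux\<bar> \<le> 1 \<and> \<bar>uy\<bar> \<le> 1"
  unfolding unit_vectors_def by auto

lemma lattice_rounding:
  fixes k r s e wx wy ux uy vx vy :: int
  assumes k: "1 \<le> k" and r: "0 \<le> r" "r < k" and s: "0 \<le> s" "s < k" and e: "\<bar>e\<bar> < k"
    and u: "r = 0 \<or> (ux, uy) \<in> unit_vectors" and v: "s = 0 \<or> (vx, vy) \<in> unit_vectors"
    and x: "k * wx + r * ux - s * vx = e" and y: "k * wy + r * uy - s * vy = 0"
  shows "\<exists>\<alpha> \<beta> :: nat. \<alpha> \<le> 1 \<and> \<beta> \<le> 1 \<and> (\<alpha> = 1 \<longrightarrow> 0 < r) \<and> (\<beta> = 1 \<longrightarrow> 0 < s)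
           \<and> wx + int \<alpha> * ux - int \<beta> * vx = 0 \<and> wy + int \<alpha> * uy - int \<beta> * vy = 0"
proof -
  have ru: "\<bar>r * ux\<bar> \<le> r" "\<bar>r * uy\<bar> \<le> r" and sv: "\<bar>s * vx\<bar> \<le> s" "\<bar>s * vy\<bar> \<le> s"
    using u v r s abs_le_of_unit_vector[of ux uy] abs_le_of_unit_vector[of vx vy]
    by (auto simp: abs_mult mult_left_le)
  have "k * wy = s * vy - r * uy" using y by linarith
  then have "\<bar>k * wy\<bar> \<le> \<bar>s * vy\<bar> + \<bar>r * uy\<bar>" by (simp add: abs_triangle_ineq4)
  then have "\<bar>k * wy\<bar> < k * 2" using ru(2) sv(2) r s by linarith
  then have "\<bar>wy\<bar> < 2" using k by (simp add: abs_mult)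
  then have wy: "wy \<in> {-1, 0, 1}" using k by auto
  have "k * wx = e + s * vx - r * ux" using x by linarith
  then have "\<bar>k * wx\<bar> \<le> \<bar>e\<bar> + \<bar>s * vx\<bar> + \<bar>r * ux\<bar>"
    using abs_triangle_ineq[of e "s * vx"] abs_triangle_ineq4[of "e + s * vx" "r * ux"] by linarith
  then have "\<bar>k * wx\<bar> < k * 3" using ru(1) sv(1) r s e by linarith
  then have "\<bar>wx\<bar> < 3" using k by (simp add: abs_mult)
  then have wx: "wx \<in> {-2, -1, 0, 1, 2}" using k by auto
  have "(wx = 0 \<and> wy = 0) \<or> (0 < r \<and> wx + ux = 0 \<and> wy + uy = 0) \<or> (0 < s \<and> wx - vx = 0 \<and> wy - vy = 0)
      \<or> (0 < r \<and> 0 < s \<and> wx + ux - vx = 0 \<and> wy + uy - vy = 0)"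
    using u v wx wy x y k r s e unfolding unit_vectors_def
    by (elim disjE insertE; simp; linarith)
  then show ?thesis
  proof (elim disjE conjE)
    assume "wx = 0" "wy = 0"
    then show ?thesis by (intro exI[of _ 0]) simp
  next
    assume "0 < r" "wx + ux = 0" "wy + uy = 0"
    then show ?thesis by (intro exI[of _ 1] exI[of _ 0]) simp
  next
    assume "0 < s" "wx - vx = 0" "wy - vy = 0"
    then show ?thesis by (intro exI[of _ 0] exI[of _ 1]) simp
  next
    assume "0 < r" "0 < s" "wx + ux - vx = 0" "wy + uy - vy = 0"
    then show ?thesis by (intro exI[of _ 1]) simp
  qed
qed

lemma chord_of_subdivision_chord:
  assumes walk: "is_walk zs" and k: "1 \<le> k"
    and ab: "a < length (subdivide k zs)" "b < length (subdivide k zs)"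
    and chord: "gdiff (subdivide k zs ! a) (subdivide k zs ! b) = (int k * D + e, 0)"
    and e: "\<bar>e\<bar> < int k"
  shows "\<exists>i j. i < length zs \<and> j < length zs \<and> gdiff (zs ! i) (zs ! j) = (D, 0)"
proof -
  have "zs \<noteq> []" using walk unfolding is_walk_def by simp
  obtain i r where i: "i < length zs" "0 \<le> r" "r < int k" "0 < r \<Longrightarrow> i + 1 < length zs"
    and a: "subdivide k zs ! a = (int k * fst (zs ! i) + r * fst (gdiff (zs ! (i + 1)) (zs ! i)),
                                  int k * snd (zs ! i) + r * snd (gdiff (zs ! (i + 1)) (zs ! i)))"
    using nth_subdivide_cases[OF \<open>zs \<noteq> []\<close> k ab(1)] by blast
  obtain j s where j: "j < length zs" "0 \<le> s" "s < int k" "0 < s \<Longrightarrow> j + 1 < length zs"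
    and b: "subdivide k zs ! b = (int k * fst (zs ! j) + s * fst (gdiff (zs ! (j + 1)) (zs ! j)),
                                  int k * snd (zs ! j) + s * snd (gdiff (zs ! (j + 1)) (zs ! j)))"
    using nth_subdivide_cases[OF \<open>zs \<noteq> []\<close> k ab(2)] by blast
  define u v where "u = gdiff (zs ! (i + 1)) (zs ! i)" and "v = gdiff (zs ! (j + 1)) (zs ! j)"
  have unit: "gdiff (zs ! (m + 1)) (zs ! m) \<in> unit_vectors" if "m + 1 < length zs" for m
    using walk that unfolding is_walk_def unit_step_iff_unit_vector by auto
  have uv: "r = 0 \<or> (fst u, snd u) \<in> unit_vectors" "s = 0 \<or> (fst v, snd v) \<in> unit_vectors"
    using i(2,4) j(2,4) unit unfolding u_def v_def by force+
  have xy: "int k * (fst (zs ! i) - fst (zs ! j) - D) + r * fst u - s * fst v = e"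
    "int k * (snd (zs ! i) - snd (zs ! j)) + r * snd u - s * snd v = 0"
    using chord unfolding a b u_def v_def gdiff_def by (simp_all add: algebra_simps)
  have "1 \<le> int k" using k by simp
  from lattice_rounding[OF this i(2,3) j(2,3) e uv xy] obtain \<alpha> \<beta> :: nat where \<alpha>\<beta>: "\<alpha> \<le> 1" "\<beta> \<le> 1" "\<alpha> = 1 \<longrightarrow> 0 < r" "\<beta> = 1 \<longrightarrow> 0 < s"
    and round: "fst (zs ! i) - fst (zs ! j) - D + int \<alpha> * fst u - int \<beta> * fst v = 0"
      "snd (zs ! i) - snd (zs ! j) + int \<alpha> * snd u - int \<beta> * snd v = 0"
    by blast
  have "zs ! (i + \<alpha>) = (fst (zs ! i) + int \<alpha> * fst u, snd (zs ! i) + int \<alpha> * snd u)"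
    "zs ! (j + \<beta>) = (fst (zs ! j) + int \<beta> * fst v, snd (zs ! j) + int \<beta> * snd v)"
    using \<alpha>\<beta>(1,2) unfolding u_def v_def gdiff_def by (auto simp: le_Suc_eq)
  then have "gdiff (zs ! (i + \<alpha>)) (zs ! (j + \<beta>)) = (D, 0)"
    using round unfolding gdiff_def by (simp add: algebra_simps)
  moreover have "i + \<alpha> < length zs" "j + \<beta> < length zs"
    using i j \<alpha>\<beta> by (auto simp: le_Suc_eq)
  ultimately show ?thesis by blast
qed

lemma not_avoidable_near_multiple:
  fixes n d k :: nat
  assumes k: "1 \<le> k" and near: "\<bar>int n - int k * int d\<bar> < int k"
  shows "\<not> avoidable n d"
proof
  assume "avoidable n d"
  then obtain zs r s where walk: "is_walk zs" and rs: "r < length zs" "s < length zs"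
    and chord: "gdiff (zs ! r) (zs ! s) = (int n, 0)"
    and avoids: "\<And>t u. t < length zs \<Longrightarrow> u < length zs \<Longrightarrow> gdiff (zs ! t) (zs ! u) \<noteq> (int d, 0)"
    unfolding avoidable_def by blast
  let ?ws = "subdivide k zs"
  have kr: "k * r < length ?ws" "k * s < length ?ws"
    using rs k by (auto simp: length_subdivide intro!: le_imp_less_Suc mult_le_mono2)
  have "gdiff (?ws ! (k * r)) (?ws ! (k * s)) = (int k * int n, 0)"
    using chord rs k by (simp add: nth_subdivide_mult gdiff_def algebra_simps)
  then have "\<exists>a b. a < length ?ws \<and> b < length ?ws \<and> gdiff (?ws ! a) (?ws ! b) = (int n, 0)"
    by (rule walk_chord_of_multiple[OF is_walk_subdivide[OF walk k] kr]) (use k in simp)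
  then obtain a b where ab: "a < length ?ws" "b < length ?ws" "gdiff (?ws ! a) (?ws ! b) = (int n, 0)"
    by blast
  have "int n = int k * int d + (int n - int k * int d)" by simp
  then obtain i j where "i < length zs" "j < length zs" "gdiff (zs ! i) (zs ! j) = (int d, 0)"
    using chord_of_subdivision_chord[OF walk k ab(1,2) _ near] ab(3) by metis
  then show False using avoids by blast
qed

section \<open>Divisors and avoidability\<close>

lemma not_avoidable_divisor:
  assumes "1 \<le> n" "d dvd n"
  shows "\<not> avoidable n d"
proof -
  obtain k where n: "n = d * k" using assms(2) by blast
  then have "1 \<le> k" using assms(1) by (cases k) auto
  then show ?thesis using not_avoidable_near_multiple[of k n d] n by (simp add: mult.commute)
qed

text \<open>For d \<ge> 7 the coprime numbers d - 1 and d - 2 both divide n, so (d - 1) * (d - 2) \<le> n.\<close>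
lemma least_nondivisor_bound:
  fixes n d :: nat
  assumes n: "1 \<le> n" "n \<notin> {1, 2, 4, 6, 12}" and d: "\<not> d dvd n"
    and least: "\<And>j. 1 \<le> j \<Longrightarrow> j < d \<Longrightarrow> j dvd n"
  shows "d * (d + 1) \<le> 2 * n"
proof -
  have nn: "n \<noteq> 1" "n \<noteq> 2" "n \<noteq> 4" "n \<noteq> 6" "n \<noteq> 12" using n by auto
  have "d \<noteq> 1" using d by auto
  then consider "d = 0" | "d = 2" | "d = 3" | "d = 4" | "d = 5" | "d = 6" | "7 \<le> d" by linarith
  then show ?thesis
  proof cases
    case 7
    define e where "e = d - 2"
    have e: "d = e + 2" "5 \<le> e" using 7 unfolding e_def by auto
    have "Suc e dvd n" "e dvd n" using least[of "Suc e"] least[of e] e by auto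
    moreover have "coprime (Suc e) e" by simp
    ultimately have "Suc e * e dvd n" by (rule divides_mult)
    then have "Suc e * e \<le> n" using n(1) by (intro dvd_imp_le) auto
    then have "e * e + e \<le> n" by simp
    moreover have "5 * e \<le> e * e" using e(2) by (intro mult_right_mono) auto
    moreover have "d * (d + 1) = e * e + 5 * e + 6" unfolding e(1) by (simp add: algebra_simps)
    ultimately show ?thesis using e(2) by linarith
  qed (use d least[of 2] least[of 3] least[of 4] nn n(1) in \<open>simp; presburger\<close>)+
qed

text \<open>Take d the least non-divisor of n and n = q * d + r with 0 < r < d. The bound
  d * (d + 1) \<le> 2 * n gives d \<le> 2 * q, so k = q works if r < q, and k = q + 1 otherwise.\<close>
lemma exists_near_multiple:
  fixes n :: nat
  assumes n: "1 \<le> n" "n \<notin> {1, 2, 4, 6, 12}"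
  obtains d k :: nat where "1 \<le> d" "\<not> d dvd n" "1 \<le> k" "\<bar>int n - int k * int d\<bar> < int k"
proof -
  define d where "d = (LEAST d. 1 \<le> d \<and> \<not> d dvd n)"
  have "1 \<le> Suc n \<and> \<not> Suc n dvd n" using n by (auto dest: dvd_imp_le)
  then have d: "1 \<le> d" "\<not> d dvd n" unfolding d_def by (metis (mono_tags, lifting) LeastI)+
  have "j dvd n" if "1 \<le> j" "j < d" for j
    using not_less_Least[of j "\<lambda>d. 1 \<le> d \<and> \<not> d dvd n"] that unfolding d_def by auto
  then have bound: "d * (d + 1) \<le> 2 * n" using least_nondivisor_bound[OF n d(2)] by blast
  define q r where "q = n div d" and "r = n mod d"
  have n_eq: "n = q * d + r" and r: "0 < r" "r < d"
    using d unfolding q_def r_def by (auto simp: dvd_eq_mod_eq_0)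
  have "d \<le> 2 * q"
  proof (rule ccontr)
    assume "\<not> d \<le> 2 * q"
    then have "(2 * q + 2) * d \<le> (d + 1) * d" by (intro mult_right_mono) auto
    then show False using bound n_eq r by (simp add: algebra_simps)
  qed
  show ?thesis
  proof (cases "r < q")
    case True
    then show ?thesis using that[of d q] d n_eq r by simp
  next
    case False
    then show ?thesis using that[of d "q + 1"] d n_eq r \<open>d \<le> 2 * q\<close> by (simp add: algebra_simps)
  qed
qed

lemma avoidableI:
  assumes "is_walk zs" "r < length zs" "s < length zs" "gdiff (zs ! r) (zs ! s) = (int n, 0)"
    and "\<forall>p \<in> set zs. \<forall>q \<in> set zs. gdiff p q \<noteq> (int d, 0)"
  shows "avoidable n d"
  unfolding avoidable_def using assms by (metis nth_mem)

text \<open>The walk (0,0), (0,-1), \<dots>, (a,-1), (a,0), (a,1), \<dots>, (n,1), (n,0): two of its points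
  in the same row are at most max a (n - a) apart, except in row 0, which only contains the
  abscissae 0, a and n.\<close>
lemma avoidable_by_detour:
  fixes n d a :: nat
  assumes "a \<le> n" "a < d" "n < a + d" "d \<noteq> n"
  shows "avoidable n d"
proof -
  define z :: "nat \<Rightarrow> gint" where
    "z j = (if j = 0 then (0, 0)
            else if j \<le> a + 1 then (int j - 1, -1)
            else if j = a + 2 then (int a, 0)
            else if j \<le> n + 3 then (int j - 3, 1)
            else (int n, 0))" for j
  let ?zs = "map z [0..<n + 5]"
  have "unit_step (z j) (z (Suc j))" if "j < n + 4" for j
    using that assms(1) unfolding z_def unit_step_iff by auto
  then have "is_walk ?zs" unfolding is_walk_def by (simp del: upt_Suc)
  moreover have "gdiff (?zs ! (n + 4)) (?zs ! 0) = (int n, 0)"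
    using assms(1) by (simp add: z_def gdiff_def del: upt_Suc)
  moreover have "gdiff (z i) (z j) \<noteq> (int d, 0)" for i j
    using assms unfolding z_def gdiff_def by auto
  ultimately show ?thesis by (intro avoidableI[of ?zs "n + 4" 0]) auto
qed

lemma avoidable_12_5: "avoidable 12 5"
proof -
  let ?zs = "[(0, 0), (0, 1), (0, 2), (1, 2), (2, 2), (3, 2), (4, 2), (4, 1), (4, 0), (4, -1), (4, -2),
    (4, -3), (5, -3), (6, -3), (6, -2), (6, -1), (6, 0), (6, 1), (7, 1), (8, 1), (8, 0), (8, -1),
    (8, -2), (8, -3), (8, -4), (9, -4), (10, -4), (11, -4), (12, -4), (12, -3), (12, -2), (12, -1),
    (12, 0)] :: gint list"
  have "is_walk ?zs"
    unfolding is_walk_def by (simp add: unit_step_def gdiff_def nth_Cons split: nat.split)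
  then show ?thesis
    by (rule avoidableI[of _ 32 0]) (auto simp: gdiff_def)
qed

lemma avoidable_nondivisor_small:
  assumes n: "n \<in> {1, 2, 4, 6, 12}" and d: "1 \<le> d" "\<not> d dvd n"
  shows "avoidable n d"
proof (cases "n + 1 < 2 * d")
  case True
  then show ?thesis using avoidable_by_detour[of "n div 2" n d] d by fastforce
next
  case False
  then have "d \<in> {1, 2, 3, 4, 5, 6}" using n d(1) by auto
  then have "n = 12 \<and> d = 5" using n d(2) False by auto
  then show ?thesis using avoidable_12_5 by simp
qed

theorem mainTheorem8:
  fixes n :: nat
  assumes "n \<ge> 1"
  shows "A n = {d. d \<ge> 1 \<and> d dvd n} \<longleftrightarrow> n \<in> {1, 2, 4, 6, 12}"
proof
  assume A_n: "A n = {d. d \<ge> 1 \<and> d dvd n}"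
  show "n \<in> {1, 2, 4, 6, 12}"
  proof (rule ccontr)
    assume "n \<notin> {1, 2, 4, 6, 12}"
    then obtain d k where "1 \<le> d" "\<not> d dvd n" "1 \<le> k" "\<bar>int n - int k * int d\<bar> < int k"
      using exists_near_multiple[OF assms] by blast
    then show False using not_avoidable_near_multiple A_n unfolding A_def by blast
  qed
next
  assume "n \<in> {1, 2, 4, 6, 12}"
  then show "A n = {d. d \<ge> 1 \<and> d dvd n}"
    using avoidable_nondivisor_small not_avoidable_divisor[OF assms] unfolding A_def by blast
qed

end
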